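(* Let $m\ge3$ and $\alpha\in[0,1]$. Every randomized social choice rule on $m$ candidates which, on every profile, places positive probability only on candidates $a$ whose integral domination graph $G(a)$ admits a perfect matching or which have $\mathrm{plu}(a)>0$, has distortion at least $2+\alpha-2/(m-2)$ on $\alpha$-decisive metric spaces.
   Context: An election: voters $V=\{1,\dots,n\}$, a fixed finite set $C$ of $m$ candidates, a profile $\sigma$ of linear orders over $C$; $a\succeq_i c$ means $a=c$ or $i$ ranks $a$ above $c$; $\mathrm{top}(i)$ is $i$'s first choice; $\mathrm{plu}(a)=|\{i:\mathrm{top}(i)=a\}|$. The integral domination graph $G(a)$ is the bipartite graph with both sides copies of $V$ and edge $(i,j)$ iff $a\succeq_i\mathrm{top}(j)$ (these are exactly the candidates that the rule \textsc{PluralityMatching} may return). A distance function $d$ on $V\cup C$ is nonnegative, symmetric and satisfies the triangle inequality (co-location allowed); consistent with $\sigma$ if $d(i,c)\le d(i,c')$ whenever $i$ ranks $c$ above $c'$; $\alpha$-decisive if $d(i,\mathrm{top}(i))\le\alpha\,d(i,c)$ for all $i$ and $c\ne\mathrm{top}(i)$. $\mathrm{SC}(c)=\sum_i d(i,c)$. The distortion of a randomized rule on $\alpha$-decisive spaces is $\sup_\sigma\sup_d\mathbb{E}[\mathrm{SC}(f(\sigma))]/\min_c\mathrm{SC}(c)$ over $\alpha$-decisive consistent $d$. *)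

theory Defs
  imports "HOL-Probability.Probability"
begin

text \<open>A profile is a list of rankings; voter i (i < length P) has ranking P ! i,
  a list of all candidates (of the finite type 'c) without repetition,
  most preferred first.\<close>

definition is_ranking :: "'c::finite list \<Rightarrow> bool" where
  "is_ranking r \<longleftrightarrow> distinct r \<and> set r = UNIV"

definition valid_profile :: "'c::finite list list \<Rightarrow> bool" where
  "valid_profile P \<longleftrightarrow> length P \<ge> 1 \<and> (\<forall>r\<in>set P. is_ranking r)"

definition ranks_above :: "'c list list \<Rightarrow> nat \<Rightarrow> 'c \<Rightarrow> 'c \<Rightarrow> bool" where
  "ranks_above P i a c \<longleftrightarrow>
     (\<exists>k l. k < l \<and> l < length (P ! i) \<and> (P ! i) ! k = a \<and> (P ! i) ! l = c)"

definition weakly_prefers :: "'c list list \<Rightarrow> nat \<Rightarrow> 'c \<Rightarrow> 'c \<Rightarrow> bool" where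
  "weakly_prefers P i a c \<longleftrightarrow> a = c \<or> ranks_above P i a c"

definition top :: "'c list list \<Rightarrow> nat \<Rightarrow> 'c" where
  "top P i = hd (P ! i)"

definition plu :: "'c list list \<Rightarrow> 'c \<Rightarrow> nat" where
  "plu P a = card {i. i < length P \<and> top P i = a}"

text \<open>Integral domination graph G(a): bipartite, both sides copies of the voters,
  edge (i,j) iff a \<succeq>_i top(j).\<close>
definition dom_edge :: "'c list list \<Rightarrow> 'c \<Rightarrow> nat \<Rightarrow> nat \<Rightarrow> bool" where
  "dom_edge P a i j \<longleftrightarrow> weakly_prefers P i a (top P j)"

definition has_perfect_matching :: "'c list list \<Rightarrow> 'c \<Rightarrow> bool" where
  "has_perfect_matching P a \<longleftrightarrow>
     (\<exists>\<pi>. bij_betw \<pi> {..<length P} {..<length P} \<and> (\<forall>i<length P. dom_edge P a i (\<pi> i)))"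

text \<open>Points of the space: voters Inl i, candidates Inr c.\<close>
definition is_distance :: "nat \<Rightarrow> (nat + 'c \<Rightarrow> nat + 'c \<Rightarrow> real) \<Rightarrow> bool" where
  "is_distance n d \<longleftrightarrow>
     (let S = Inl ` {..<n} \<union> range Inr in
      (\<forall>x\<in>S. d x x = 0) \<and>
      (\<forall>x\<in>S. \<forall>y\<in>S. d x y \<ge> 0 \<and> d x y = d y x) \<and>
      (\<forall>x\<in>S. \<forall>y\<in>S. \<forall>z\<in>S. d x z \<le> d x y + d y z))"

definition consistent :: "'c list list \<Rightarrow> (nat + 'c \<Rightarrow> nat + 'c \<Rightarrow> real) \<Rightarrow> bool" where
  "consistent P d \<longleftrightarrow>
     (\<forall>i<length P. \<forall>c c'. ranks_above P i c c' \<longrightarrow> d (Inl i) (Inr c) \<le> d (Inl i) (Inr c'))"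

definition decisive :: "real \<Rightarrow> 'c list list \<Rightarrow> (nat + 'c \<Rightarrow> nat + 'c \<Rightarrow> real) \<Rightarrow> bool" where
  "decisive \<alpha> P d \<longleftrightarrow>
     (\<forall>i<length P. \<forall>c. c \<noteq> top P i \<longrightarrow> d (Inl i) (Inr (top P i)) \<le> \<alpha> * d (Inl i) (Inr c))"

definition SC :: "'c list list \<Rightarrow> (nat + 'c \<Rightarrow> nat + 'c \<Rightarrow> real) \<Rightarrow> 'c \<Rightarrow> real" where
  "SC P d c = (\<Sum>i<length P. d (Inl i) (Inr c))"

text \<open>Distortion of a randomized rule on \<alpha>-decisive spaces (as an extended real;
  the ratio uses Isabelle's convention x / 0 = 0).\<close>
definition distortion :: "real \<Rightarrow> ('c::finite list list \<Rightarrow> 'c pmf) \<Rightarrow> ereal" where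
  "distortion \<alpha> f =
     (SUP (P, d) \<in> {(P, d). valid_profile P \<and> is_distance (length P) d \<and> consistent P d \<and> decisive \<alpha> P d}.
        ereal (measure_pmf.expectation (f P) (SC P d) / Min (range (SC P d))))"

end

(* Fix candidates b and w and let c_1, ..., c_k (k = m - 2) be the others.  One voter ranks
   w first and b last; for each j, N voters rank c_j first and b second.  Since b is nobody's
   favourite and is ranked last by someone, the rule never selects b.  Place b at the centre of a
   star whose j-th spoke carries the voters of c_j at distance 1 and c_j itself at distance 1 + \<alpha>,
   and put w together with its single voter at distance 3 from everything else.  The voters are then
   \<alpha>-decisive, SC(b) = 3 + N k, and every other candidate costs at least
   (2 + \<alpha> - 2/k) SC(b) - 9; letting N grow gives the bound. *)

theory Submission
  imports Defs
begin

lemma sum_nth_eq_sum_list: "(\<Sum>i<length xs. f (xs ! i)) = sum_list (map f xs)"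
  by (simp add: sum_list_sum_nth atLeast0LessThan)

lemma sum_list_concat_replicate:
  "sum_list (concat (replicate n xs)) = of_nat n * (sum_list xs :: 'a::semiring_1)"
  by (induction n) (simp_all add: algebra_simps)

lemma plu_eq_0_iff: "plu P a = 0 \<longleftrightarrow> (\<forall>r\<in>set P. hd r \<noteq> a)"
  by (force simp: plu_def top_def in_set_conv_nth)

lemma not_ranks_above_last:
  assumes "distinct (P ! i)"
  shows "\<not> ranks_above P i (last (P ! i)) c"
proof
  assume "ranks_above P i (last (P ! i)) c"
  then obtain k l where kl: "k < l" "l < length (P ! i)" "P ! i ! k = last (P ! i)"
    unfolding ranks_above_def by blast
  moreover have "P ! i \<noteq> []" using kl by auto
  ultimately have "P ! i ! k = P ! i ! (length (P ! i) - 1)"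
    by (simp add: last_conv_nth)
  with kl have "k = length (P ! i) - 1"
    using nth_eq_iff_index_eq[OF assms, of k "length (P ! i) - 1"] by simp
  with kl show False by simp
qed

lemma not_has_perfect_matching_if_ranked_last:
  assumes "i < length P" "distinct (P ! i)" "last (P ! i) = a" "plu P a = 0"
  shows "\<not> has_perfect_matching P a"
proof
  assume "has_perfect_matching P a"
  then obtain \<pi> where \<pi>: "bij_betw \<pi> {..<length P} {..<length P}"
    and edges: "\<forall>j<length P. dom_edge P a j (\<pi> j)"
    unfolding has_perfect_matching_def by blast
  have "\<pi> i < length P" using \<pi> assms(1) bij_betwE by blast
  then have "top P (\<pi> i) \<noteq> a"
    using assms(4) by (simp add: plu_eq_0_iff top_def)
  moreover have "weakly_prefers P i a (top P (\<pi> i))"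
    using edges assms(1) by (simp add: dom_edge_def)
  ultimately show False
    using not_ranks_above_last[OF assms(2)] assms(3) by (auto simp: weakly_prefers_def)
qed

lemma consistent_if_sorted:
  assumes "\<And>i. i < length P \<Longrightarrow> sorted (map (\<lambda>c. d (Inl i) (Inr c)) (P ! i))"
  shows "consistent P d"
  unfolding consistent_def ranks_above_def
  using sorted_nth_mono[OF assms] by fastforce

lemma is_distance_pullback:
  assumes "\<And>x. D x x = 0" "\<And>x y. 0 \<le> D x y" "\<And>x y. D x y = D y x"
    and "\<And>x y z. D x z \<le> D x y + D y z"
  shows "is_distance n (\<lambda>x y. D (loc x) (loc y))"
  unfolding is_distance_def Let_def using assms by blast

lemma distortion_ge_if_approx:
  assumes "\<And>N. 1 \<le> N \<Longrightarrow> \<exists>P d. valid_profile P \<and> is_distance (length P) d \<and> consistent P d \<and>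
      decisive \<alpha> P d \<and> B - c / real N \<le> measure_pmf.expectation (f P) (SC P d) / Min (range (SC P d))"
  shows "ereal B \<le> distortion \<alpha> f"
proof (rule ereal_le_epsilon2)
  fix e :: real assume "0 < e"
  obtain n :: nat where "c / e < real n"
    using reals_Archimedean2 by blast
  with \<open>0 < e\<close> have "c / real (Suc n) < e"
    by (simp add: field_simps)
  moreover obtain P d where admissible:
      "valid_profile P \<and> is_distance (length P) d \<and> consistent P d \<and> decisive \<alpha> P d"
    and ratio: "B - c / real (Suc n) \<le> measure_pmf.expectation (f P) (SC P d) / Min (range (SC P d))"
    using assms[of "Suc n"] by auto
  ultimately have "ereal B \<le> ereal (measure_pmf.expectation (f P) (SC P d) / Min (range (SC P d))) + ereal e"
    by simp
  also have "\<dots> \<le> distortion \<alpha> f + ereal e"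
    unfolding distortion_def using admissible by (intro add_right_mono SUP_upper2[of "(P, d)"]) auto
  finally show "ereal B \<le> distortion \<alpha> f + ereal e" .
qed

datatype 'c site = Far | Hub | Voter 'c | Cand 'c

fun site_dist :: "real \<Rightarrow> 'c site \<Rightarrow> 'c site \<Rightarrow> real" where
  "site_dist \<alpha> Far Far = 0"
| "site_dist \<alpha> Far _ = 3"
| "site_dist \<alpha> _ Far = 3"
| "site_dist \<alpha> Hub Hub = 0"
| "site_dist \<alpha> Hub (Voter c) = 1"
| "site_dist \<alpha> (Voter c) Hub = 1"
| "site_dist \<alpha> Hub (Cand c) = 1 + \<alpha>"
| "site_dist \<alpha> (Cand c) Hub = 1 + \<alpha>"
| "site_dist \<alpha> (Voter c) (Voter c') = (if c = c' then 0 else 2)"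
| "site_dist \<alpha> (Cand c) (Cand c') = (if c = c' then 0 else 2 + 2 * \<alpha>)"
| "site_dist \<alpha> (Voter c) (Cand c') = (if c = c' then \<alpha> else 2 + \<alpha>)"
| "site_dist \<alpha> (Cand c) (Voter c') = (if c = c' then \<alpha> else 2 + \<alpha>)"

lemma site_dist_self: "site_dist \<alpha> x x = 0"
  by (cases x) auto

lemma site_dist_commute: "site_dist \<alpha> x y = site_dist \<alpha> y x"
  by (cases x; cases y) auto

lemma site_dist_nonneg: "0 \<le> \<alpha> \<Longrightarrow> 0 \<le> site_dist \<alpha> x y"
  by (cases x; cases y) auto

lemma site_dist_triangle:
  "0 \<le> \<alpha> \<Longrightarrow> \<alpha> \<le> 1 \<Longrightarrow> site_dist \<alpha> x z \<le> site_dist \<alpha> x y + site_dist \<alpha> y z"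
  by (cases x; cases y; cases z) auto

definition spoke_ranking :: "'c \<Rightarrow> 'c \<Rightarrow> 'c list \<Rightarrow> 'c \<Rightarrow> 'c list" where
  "spoke_ranking b w cs c = c # b # filter (\<lambda>x. x \<noteq> c) cs @ [w]"

definition star_profile :: "'c \<Rightarrow> 'c \<Rightarrow> 'c list \<Rightarrow> nat \<Rightarrow> 'c list list" where
  "star_profile b w cs N =
     (w # cs @ [b]) # concat (replicate N (map (spoke_ranking b w cs) cs))"

definition voter_site :: "'c \<Rightarrow> 'c list \<Rightarrow> 'c site" where
  "voter_site w r = (if hd r = w then Far else Voter (hd r))"

definition cand_site :: "'c \<Rightarrow> 'c \<Rightarrow> 'c \<Rightarrow> 'c site" where
  "cand_site b w c = (if c = b then Hub else if c = w then Far else Cand c)"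

definition star_dist :: "real \<Rightarrow> 'c \<Rightarrow> 'c \<Rightarrow> 'c list list \<Rightarrow> nat + 'c \<Rightarrow> nat + 'c \<Rightarrow> real" where
  "star_dist \<alpha> b w P x y =
     (let site = case_sum (\<lambda>i. voter_site w (P ! i)) (cand_site b w)
      in site_dist \<alpha> (site x) (site y))"

locale star_instance =
  fixes b w :: "'c::finite" and cs :: "'c list" and \<alpha> :: real and N :: nat
  assumes b_ne_w: "b \<noteq> w" and distinct_cs: "distinct cs" and set_cs: "set cs = UNIV - {b, w}"
    and cs_ne_Nil: "cs \<noteq> []" and \<alpha>_nonneg: "0 \<le> \<alpha>" and \<alpha>_le_1: "\<alpha> \<le> 1" and N_ge_1: "1 \<le> N"
begin

abbreviation "P \<equiv> star_profile b w cs N"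
abbreviation "d \<equiv> star_dist \<alpha> b w P"
abbreviation "k \<equiv> real (length cs)"

lemma set_profile: "set P = insert (w # cs @ [b]) (spoke_ranking b w cs ` set cs)"
  using N_ge_1 by (auto simp: star_profile_def)

lemma voter_dist: "d (Inl i) (Inr c) = site_dist \<alpha> (voter_site w (P ! i)) (cand_site b w c)"
  by (simp add: star_dist_def)

lemma star_profile_rankingE:
  assumes "r \<in> set P"
  obtains "r = w # cs @ [b]" | c where "c \<in> set cs" "r = spoke_ranking b w cs c"
  using assms set_profile by auto

lemma valid_profile: "valid_profile P"
  using b_ne_w distinct_cs set_cs
  by (auto simp: valid_profile_def star_profile_def is_ranking_def spoke_ranking_def)

lemma is_distance: "is_distance (length P) d"
  unfolding star_dist_def Let_def
  by (rule is_distance_pullback)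
    (simp_all add: site_dist_self site_dist_nonneg[OF \<alpha>_nonneg] site_dist_commute
      site_dist_triangle[OF \<alpha>_nonneg \<alpha>_le_1])

lemma sorted_dist_along_ranking:
  assumes "r \<in> set P"
  shows "sorted (map (\<lambda>c. site_dist \<alpha> (voter_site w r) (cand_site b w c)) r)"
  using assms
proof (cases rule: star_profile_rankingE)
  case 1
  have "map (\<lambda>c. site_dist \<alpha> Far (cand_site b w c)) (cs @ [b]) = replicate (length cs + 1) 3"
    using set_cs by (intro replicate_eqI) (auto simp: cand_site_def)
  then show ?thesis
    using 1 by (simp add: voter_site_def cand_site_def)
next
  case (2 c)
  have "map (\<lambda>x. site_dist \<alpha> (Voter c) (cand_site b w x)) (filter (\<lambda>x. x \<noteq> c) cs) =
      replicate (length (filter (\<lambda>x. x \<noteq> c) cs)) (2 + \<alpha>)"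
    using set_cs by (intro replicate_eqI) (auto simp: cand_site_def)
  then show ?thesis
    using 2 set_cs b_ne_w \<alpha>_nonneg \<alpha>_le_1
    by (auto simp: spoke_ranking_def voter_site_def cand_site_def sorted_append)
qed

lemma consistent: "consistent P d"
  by (rule consistent_if_sorted)
    (simp add: voter_dist sorted_dist_along_ranking del: sorted_map)

lemma decisive: "decisive \<alpha> P d"
  unfolding decisive_def top_def voter_dist
proof (intro allI impI)
  fix i x assume i: "i < length P" and x: "x \<noteq> hd (P ! i)"
  let ?dist = "\<lambda>c. site_dist \<alpha> (voter_site w (P ! i)) (cand_site b w c)"
  from nth_mem[OF i] show "?dist (hd (P ! i)) \<le> \<alpha> * ?dist x"
  proof (cases rule: star_profile_rankingE)
    case 1
    then show ?thesis
      using b_ne_w \<alpha>_nonneg site_dist_nonneg by (simp add: voter_site_def cand_site_def)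
  next
    case (2 c)
    then have "1 \<le> ?dist x"
      using x set_cs \<alpha>_nonneg by (auto simp: spoke_ranking_def voter_site_def cand_site_def)
    then have "\<alpha> \<le> \<alpha> * ?dist x"
      using \<alpha>_nonneg by (metis mult.right_neutral mult_left_mono)
    then show ?thesis
      using 2 set_cs by (auto simp: spoke_ranking_def voter_site_def cand_site_def)
  qed
qed

lemma plu_b: "plu P b = 0"
  using b_ne_w set_cs by (auto simp: plu_eq_0_iff set_profile spoke_ranking_def)

lemma not_has_perfect_matching_b: "\<not> has_perfect_matching P b"
  using b_ne_w distinct_cs set_cs
  by (intro not_has_perfect_matching_if_ranked_last[of 0 _ _, OF _ _ _ plu_b])
    (auto simp: star_profile_def)

lemma SC_eq:
  "SC P d x = site_dist \<alpha> Far (cand_site b w x)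
     + real N * (\<Sum>c\<in>set cs. site_dist \<alpha> (Voter c) (cand_site b w x))"
proof -
  let ?dist = "\<lambda>s. site_dist \<alpha> s (cand_site b w x)"
  have "SC P d x = sum_list (map (\<lambda>r. ?dist (voter_site w r)) P)"
    unfolding SC_def voter_dist by (rule sum_nth_eq_sum_list)
  also have "\<dots> = ?dist Far + real N * (\<Sum>c\<in>set cs. ?dist (voter_site w (spoke_ranking b w cs c)))"
    using distinct_cs
    by (simp add: star_profile_def map_concat sum_list_concat_replicate voter_site_def o_def
        sum_list_distinct_conv_sum_set)
  also have "(\<Sum>c\<in>set cs. ?dist (voter_site w (spoke_ranking b w cs c))) = (\<Sum>c\<in>set cs. ?dist (Voter c))"
    using set_cs by (intro sum.cong) (auto simp: voter_site_def spoke_ranking_def)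
  finally show ?thesis .
qed

lemma card_set_cs: "card (set cs) = length cs"
  using distinct_cs by (rule distinct_card)

lemma SC_b: "SC P d b = 3 + real N * k"
  by (simp add: SC_eq cand_site_def card_set_cs)

lemma SC_w: "SC P d w = 3 * real N * k"
  using b_ne_w by (simp add: SC_eq cand_site_def card_set_cs)

lemma SC_cand:
  assumes "x \<in> set cs"
  shows "SC P d x = 3 + real N * (k * (2 + \<alpha>) - 2)"
proof -
  have "(\<Sum>c\<in>set cs. site_dist \<alpha> (Voter c) (Cand x)) = (\<Sum>c\<in>set cs. (2 + \<alpha>) - (if c = x then 2 else 0))"
    by (intro sum.cong) auto
  also have "\<dots> = k * (2 + \<alpha>) - 2"
    using assms by (simp add: sum_subtractf card_set_cs)
  finally show ?thesis
    using assms set_cs by (simp add: SC_eq cand_site_def)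
qed

lemma k_ge_1: "1 \<le> k"
  using cs_ne_Nil by (simp add: Suc_le_eq)

lemma SC_ge_SC_b:
  assumes "a \<noteq> b"
  shows "(2 + \<alpha> - 2 / k) * SC P d b - 9 \<le> SC P d a"
proof -
  let ?B = "2 + \<alpha> - 2 / k"
  have B_le_3: "?B \<le> 3"
    using \<alpha>_le_1 divide_nonneg_nonneg[of 2 k] by linarith
  show ?thesis
  proof (cases "a = w")
    case True
    have "?B * SC P d b \<le> 3 * SC P d b"
      using B_le_3 by (intro mult_right_mono) (simp_all add: SC_b)
    then show ?thesis
      using True by (simp add: SC_b SC_w algebra_simps)
  next
    case False
    with assms set_cs have "SC P d a = 3 + real N * (k * (2 + \<alpha>) - 2)"
      by (intro SC_cand) auto
    also have "\<dots> = 3 + real N * k * ?B"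
      using cs_ne_Nil by (simp add: algebra_simps)
    finally show ?thesis
      using B_le_3 by (simp add: SC_b algebra_simps)
  qed
qed

lemma SC_pos: "0 < SC P d x"
proof (cases "x = w")
  case True
  then show ?thesis using N_ge_1 cs_ne_Nil by (simp add: SC_w zero_less_mult_iff)
next
  case False
  then have "site_dist \<alpha> Far (cand_site b w x) = 3"
    by (simp add: cand_site_def)
  moreover have "0 \<le> real N * (\<Sum>c\<in>set cs. site_dist \<alpha> (Voter c) (cand_site b w x))"
    using \<alpha>_nonneg by (intro mult_nonneg_nonneg sum_nonneg) (simp_all add: site_dist_nonneg)
  ultimately show ?thesis by (simp add: SC_eq)
qed

lemma ratio_ge:
  assumes "b \<notin> set_pmf p"
  shows "2 + \<alpha> - 2 / k - 9 / real N \<le>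
    measure_pmf.expectation p (SC P d) / Min (range (SC P d))"
proof -
  let ?B = "2 + \<alpha> - 2 / k" and ?E = "measure_pmf.expectation p (SC P d)"
    and ?M = "Min (range (SC P d))" and ?S = "SC P d b"
  have integrable: "integrable (measure_pmf p) (SC P d)"
    by (rule integrable_measure_pmf_finite) simp
  have E_ge: "?B * ?S - 9 \<le> ?E"
    using assms
    by (intro measure_pmf.integral_ge_const[OF integrable] AE_pmfI SC_ge_SC_b) auto
  have E_nonneg: "0 \<le> ?E"
    using SC_pos by (intro measure_pmf.integral_ge_const[OF integrable] AE_pmfI less_imp_le)
  have M_pos: "0 < ?M"
    using SC_pos Min_in[of "range (SC P d)"] by auto
  have M_le_S: "?M \<le> ?S"
    by (rule Min_le) simp_all
  have N_le_S: "real N \<le> ?S"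
    using mult_left_mono[OF k_ge_1, of "real N"] by (simp add: SC_b)
  have "?B - 9 / real N \<le> ?B - 9 / ?S"
    using N_ge_1 N_le_S by (simp add: frac_le)
  also have "\<dots> = (?B * ?S - 9) / ?S"
    using SC_pos[of b] by (simp add: field_simps)
  also have "\<dots> \<le> ?E / ?S"
    using E_ge SC_pos[of b] by (simp add: divide_right_mono)
  also have "\<dots> \<le> ?E / ?M"
    using M_le_S E_nonneg by (rule divide_left_mono) (simp add: M_pos SC_pos)
  finally show ?thesis .
qed

lemma approximating_instance:
  fixes f :: "'c list list \<Rightarrow> 'c pmf"
  assumes "\<forall>Q. valid_profile Q \<longrightarrow> (\<forall>a \<in> set_pmf (f Q). has_perfect_matching Q a \<or> plu Q a > 0)"
  shows "\<exists>Q D. valid_profile Q \<and> is_distance (length Q) D \<and> consistent Q D \<and> decisive \<alpha> Q D \<and>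
    2 + \<alpha> - 2 / k - 9 / real N \<le> measure_pmf.expectation (f Q) (SC Q D) / Min (range (SC Q D))"
proof -
  have "b \<notin> set_pmf (f P)"
    using assms valid_profile not_has_perfect_matching_b plu_b by (metis less_irrefl)
  then show ?thesis
    using ratio_ge valid_profile is_distance consistent decisive by blast
qed

end

lemma obtain_two_and_rest:
  assumes "2 \<le> CARD('c::finite)"
  obtains b w :: "'c::finite" and cs
  where "b \<noteq> w" "distinct cs" "set cs = UNIV - {b, w}" "length cs = CARD('c) - 2"
proof -
  obtain A :: "'c set" where "card A = 2"
    using ex_card[OF assms] by blast
  then obtain b w :: 'c where bw: "b \<noteq> w"
    by (auto simp: card_2_iff)
  obtain cs where cs: "distinct cs" "set cs = UNIV - {b, w}"
    using finite_distinct_list[of "UNIV - {b, w}"] by auto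
  have "length cs = card (UNIV - {b, w})"
    using cs by (metis distinct_card)
  also have "\<dots> = CARD('c) - 2"
    using bw by (simp add: card_Diff_subset)
  finally show ?thesis
    using that bw cs by blast
qed

theorem theorem6:
  fixes f :: "'c::finite list list \<Rightarrow> 'c pmf" and \<alpha> :: real
  assumes "CARD('c) \<ge> 3"
    and "0 \<le> \<alpha>" and "\<alpha> \<le> 1"
    and "\<forall>P. valid_profile P \<longrightarrow>
           (\<forall>a \<in> set_pmf (f P). has_perfect_matching P a \<or> plu P a > 0)"
  shows "distortion \<alpha> f \<ge> ereal (2 + \<alpha> - 2 / (real CARD('c) - 2))"
proof -
  have "2 \<le> CARD('c)"
    using assms(1) by simp
  then obtain b w :: 'c and cs
    where bwcs: "b \<noteq> w" "distinct cs" "set cs = UNIV - {b, w}" and len: "length cs = CARD('c) - 2"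
    by (rule obtain_two_and_rest)
  have "cs \<noteq> []"
    using len assms(1) by auto
  have k: "real (length cs) = real CARD('c) - 2"
    using len assms(1) by (simp add: of_nat_diff)
  have "star_instance b w cs \<alpha> N" if "1 \<le> N" for N
    using bwcs \<open>cs \<noteq> []\<close> assms(2,3) that by unfold_locales
  then show ?thesis
    using star_instance.approximating_instance[where cs = cs, OF _ assms(4), unfolded k]
    by (intro distortion_ge_if_approx[where c = 9]) blast
qed

end
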